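(* Let $c$ be a statement, $lc$ a location and $b$ a Boolean. If $lc \in \mathit{all\_locations}\ c\ \mathit{PTop}$, then every location occurring as the first component of an element of $\mathit{synt\_step\_image}\ (lc,b)$ belongs to $\mathit{all\_locations}\ c\ \mathit{PTop}$.
   Context: Syntax. Values: $\mathit{val} ::= \mathit{Bool}\ b \mid \mathit{Null}$. Expressions: $\mathit{expr} ::= \mathit{Val}\ v \mid \mathit{Var}\ x$. Statements: $\mathit{stmt} ::= \mathit{Empty} \mid \mathit{Assign}\ x\ v \mid \mathit{Seq}\ c_1\ c_2 \mid \mathit{Cond}\ e\ c_1\ c_2 \mid \mathit{While}\ e\ c$. Statement paths: $\mathit{stmt\_path} ::= \mathit{PTop} \mid \mathit{PSeqLeft}\ sp\ c_2 \mid \mathit{PSeqRight}\ c_1\ sp \mid \mathit{PCondLeft}\ e\ sp\ c_2 \mid \mathit{PCondRight}\ e\ c_1\ sp \mid \mathit{PWhile}\ e\ sp$. A location is $\mathit{Loc}\ c\ sp$. A syntactic configuration is a pair (location, Boolean). $\mathit{all\_locations}\ c\ sp$ is the list of all locations of subtrees of $c$ in context $sp$: it contains $\mathit{Loc}\ c\ sp$, and additionally for $c=\mathit{Seq}\ c_1\ c_2$ the elements of $\mathit{all\_locations}\ c_1\ (\mathit{PSeqLeft}\ sp\ c_2)$ and $\mathit{all\_locations}\ c_2\ (\mathit{PSeqRight}\ c_1\ sp)$; for $c=\mathit{Cond}\ e\ c_1\ c_2$ those of $\mathit{all\_locations}\ c_1\ (\mathit{PCondLeft}\ e\ sp\ c_2)$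 and $\mathit{all\_locations}\ c_2\ (\mathit{PCondRight}\ e\ c_1\ sp)$; for $c=\mathit{While}\ e\ c'$ those of $\mathit{all\_locations}\ c'\ (\mathit{PWhile}\ e\ sp)$; and nothing else. Next location: $\mathit{next\_loc}\ c\ \mathit{PTop} = (\mathit{Loc}\ c\ \mathit{PTop}, \mathit{False})$; $\mathit{next\_loc}\ c\ (\mathit{PSeqLeft}\ sp\ c_2) = (\mathit{Loc}\ c_2\ (\mathit{PSeqRight}\ c\ sp), \mathit{True})$; $\mathit{next\_loc}\ c\ (\mathit{PSeqRight}\ c_1\ sp) = (\mathit{Loc}\ (\mathit{Seq}\ c_1\ c)\ sp, \mathit{False})$; $\mathit{next\_loc}\ c\ (\mathit{PCondLeft}\ e\ sp\ c_2) = (\mathit{Loc}\ (\mathit{Cond}\ e\ c\ c_2)\ sp, \mathit{False})$; $\mathit{next\_loc}\ c\ (\mathit{PCondRight}\ e\ c_1\ sp) = (\mathit{Loc}\ (\mathit{Cond}\ e\ c_1\ c)\ sp, \mathit{False})$; $\mathit{next\_loc}\ c\ (\mathit{PWhile}\ e\ sp) = (\mathit{Loc}\ (\mathit{While}\ e\ c)\ sp, \mathit{True})$. $\mathit{synt\_step\_image}$: $(\mathit{Loc}\ \mathit{Empty}\ sp,\mathit{True})\mapsto[(\mathit{Loc}\ \mathit{Empty}\ sp,\mathit{False})]$; $(\mathit{Loc}\ (\mathit{Assign}\ x\ v)\ sp,\mathit{True})\mapsto[(\mathit{Loc}\ (\mathit{Assign}\ x\ v)\ sp,\mathit{False})]$;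 $(\mathit{Loc}\ (\mathit{Seq}\ c_1\ c_2)\ sp,\mathit{True})\mapsto[(\mathit{Loc}\ c_1\ (\mathit{PSeqLeft}\ sp\ c_2),\mathit{True})]$; $(\mathit{Loc}\ (\mathit{Cond}\ e\ c_1\ c_2)\ sp,\mathit{True})\mapsto[(\mathit{Loc}\ c_1\ (\mathit{PCondLeft}\ e\ sp\ c_2),\mathit{True}),(\mathit{Loc}\ c_2\ (\mathit{PCondRight}\ e\ c_1\ sp),\mathit{True})]$; $(\mathit{Loc}\ (\mathit{While}\ e\ c)\ sp,\mathit{True})\mapsto[(\mathit{Loc}\ c\ (\mathit{PWhile}\ e\ sp),\mathit{True}),(\mathit{Loc}\ (\mathit{While}\ e\ c)\ sp,\mathit{False})]$; $(\mathit{Loc}\ c\ sp,\mathit{False})\mapsto[\,]$ if $sp=\mathit{PTop}$, else $[\mathit{next\_loc}\ c\ sp]$. *)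

theory Defs
  imports Main
begin

type_synonym vname = string

datatype val = Bool bool | Null

datatype expr = Val val | Var vname

datatype stmt = Empty | Assign vname val | Seq stmt stmt | Cond expr stmt stmt | While expr stmt

datatype stmt_path = PTop | PSeqLeft stmt_path stmt | PSeqRight stmt stmt_path
  | PCondLeft expr stmt_path stmt | PCondRight expr stmt stmt_path | PWhile expr stmt_path

datatype location = Loc stmt stmt_path

type_synonym synt_config = "location \<times> bool"

fun all_locations :: "stmt \<Rightarrow> stmt_path \<Rightarrow> location list" where
  "all_locations (Seq c1 c2) sp =
     Loc (Seq c1 c2) sp # all_locations c1 (PSeqLeft sp c2) @ all_locations c2 (PSeqRight c1 sp)"
| "all_locations (Cond e c1 c2) sp =
     Loc (Cond e c1 c2) sp # all_locations c1 (PCondLeft e sp c2) @ all_locations c2 (PCondRight e c1 sp)"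
| "all_locations (While e c) sp = Loc (While e c) sp # all_locations c (PWhile e sp)"
| "all_locations c sp = [Loc c sp]"

fun next_loc :: "stmt \<Rightarrow> stmt_path \<Rightarrow> synt_config" where
  "next_loc c PTop = (Loc c PTop, False)"
| "next_loc c (PSeqLeft sp c2) = (Loc c2 (PSeqRight c sp), True)"
| "next_loc c (PSeqRight c1 sp) = (Loc (Seq c1 c) sp, False)"
| "next_loc c (PCondLeft e sp c2) = (Loc (Cond e c c2) sp, False)"
| "next_loc c (PCondRight e c1 sp) = (Loc (Cond e c1 c) sp, False)"
| "next_loc c (PWhile e sp) = (Loc (While e c) sp, True)"

fun synt_step_image :: "synt_config \<Rightarrow> synt_config list" where
  "synt_step_image (Loc Empty sp, True) = [(Loc Empty sp, False)]"
| "synt_step_image (Loc (Assign x v) sp, True) = [(Loc (Assign x v) sp, False)]"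
| "synt_step_image (Loc (Seq c1 c2) sp, True) = [(Loc c1 (PSeqLeft sp c2), True)]"
| "synt_step_image (Loc (Cond e c1 c2) sp, True) =
     [(Loc c1 (PCondLeft e sp c2), True), (Loc c2 (PCondRight e c1 sp), True)]"
| "synt_step_image (Loc (While e c) sp, True) =
     [(Loc c (PWhile e sp), True), (Loc (While e c) sp, False)]"
| "synt_step_image (Loc c sp, False) = (if sp = PTop then [] else [next_loc c sp])"

end

theory Submission
  imports Defs
begin

text \<open>A step from an entry configuration descends into an immediate subterm, so it stays
among the locations below the current one. A step from an exit configuration moves to the
sibling or the parent, and exists only below the root, where sibling and parent are again
locations of the whole program.\<close>

lemma Loc_in_all_locations: "Loc c sp \<in> set (all_locations c sp)"
  by (cases c) auto

lemma all_locations_subset: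
  "Loc c' sp' \<in> set (all_locations c sp) \<Longrightarrow>
   set (all_locations c' sp') \<subseteq> set (all_locations c sp)"
  by (induction c arbitrary: sp) auto

lemma next_loc_in_all_locations:
  assumes "Loc c' sp' \<in> set (all_locations c sp)" and "Loc c' sp' \<noteq> Loc c sp"
  shows "fst (next_loc c' sp') \<in> set (all_locations c sp)"
  using assms
proof (induction c arbitrary: sp)
  case (Seq c1 c2)
  consider "Loc c' sp' \<in> set (all_locations c1 (PSeqLeft sp c2))"
    | "Loc c' sp' \<in> set (all_locations c2 (PSeqRight c1 sp))"
    using Seq.prems by auto
  then show ?case
  proof cases
    case 1
    then show ?thesis
      using Seq.IH(1)[OF 1] Loc_in_all_locations[of c2 "PSeqRight c1 sp"]
      by (cases "Loc c' sp' = Loc c1 (PSeqLeft sp c2)") auto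
  next
    case 2
    then show ?thesis
      using Seq.IH(2)[OF 2] by (cases "Loc c' sp' = Loc c2 (PSeqRight c1 sp)") auto
  qed
next
  case (Cond e c1 c2)
  consider "Loc c' sp' \<in> set (all_locations c1 (PCondLeft e sp c2))"
    | "Loc c' sp' \<in> set (all_locations c2 (PCondRight e c1 sp))"
    using Cond.prems by auto
  then show ?case
    by cases (use Cond.IH in fastforce)+
next
  case (While e c)
  then show ?case by (cases "Loc c' sp' = Loc c (PWhile e sp)") auto
qed auto

lemma synt_step_image_True_in_all_locations:
  "cfg \<in> set (synt_step_image (Loc c sp, True)) \<Longrightarrow>
   fst cfg \<in> set (all_locations c sp)"
  by (cases c) (auto intro: Loc_in_all_locations)

theorem lemma2:
  fixes c :: stmt and lc :: location and b :: bool
  assumes "lc \<in> set (all_locations c PTop)"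
  shows "\<forall>cfg \<in> set (synt_step_image (lc, b)). fst cfg \<in> set (all_locations c PTop)"
proof
  fix cfg assume cfg: "cfg \<in> set (synt_step_image (lc, b))"
  obtain c' sp' where lc: "lc = Loc c' sp'" by (cases lc)
  show "fst cfg \<in> set (all_locations c PTop)"
  proof (cases b)
    case True
    with cfg lc have "fst cfg \<in> set (all_locations c' sp')"
      by (simp add: synt_step_image_True_in_all_locations)
    then show ?thesis using all_locations_subset assms lc by blast
  next
    case False
    with cfg lc have "sp' \<noteq> PTop" "cfg = next_loc c' sp'"
      by (auto split: if_splits)
    then show ?thesis using next_loc_in_all_locations assms lc by auto
  qed
qed

end
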